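(* Let $G=(V,E)$ be a finite undirected graph and let $\mathcal C$ be a collection of odd cycles of $G$ that are pairwise edge-disjoint. Then every vertex (extreme point) of the polytope $$\Big\{x\in[0,1]^E:\ \sum_{e\in\delta(i)}x_e\le1\ \ \forall i\in V,\quad \sum_{e\in E(C)}x_e\le\tfrac{|C|-1}{2}\ \ \forall C\in\mathcal C\Big\}$$ is half-integral, i.e. lies in $\{0,\tfrac12,1\}^E$. In particular, for any edge weights the linear program maximizing $\sum_e w_e x_e$ over this polytope has a half-integral optimal solution.
   Context: $\delta(i)$ is the set of edges incident to vertex $i$; for a cycle $C$, $E(C)$ is its edge set and $|C|$ its length (number of vertices). *)

theory Defs
  imports Complex_Main
begin

definition graph :: "'a set \<Rightarrow> 'a set set \<Rightarrow> bool" where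
  "graph V E \<longleftrightarrow> finite V \<and> (\<forall>e\<in>E. e \<subseteq> V \<and> card e = 2)"

definition delta :: "'a set set \<Rightarrow> 'a \<Rightarrow> 'a set set" where
  "delta E i = {e \<in> E. i \<in> e}"

definition cycle_edges :: "'a list \<Rightarrow> 'a set set" where
  "cycle_edges C = {{C ! i, C ! ((i + 1) mod length C)} | i. i < length C}"

definition is_cycle :: "'a set \<Rightarrow> 'a set set \<Rightarrow> 'a list \<Rightarrow> bool" where
  "is_cycle V E C \<longleftrightarrow> length C \<ge> 3 \<and> distinct C \<and> set C \<subseteq> V \<and> cycle_edges C \<subseteq> E"

definition is_odd_cycle :: "'a set \<Rightarrow> 'a set set \<Rightarrow> 'a list \<Rightarrow> bool" where
  "is_odd_cycle V E C \<longleftrightarrow> is_cycle V E C \<and> odd (length C)"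

text \<open>The polytope, as a set of vectors x in R^E (functions vanishing outside E).\<close>
definition cycle_polytope :: "'a set \<Rightarrow> 'a set set \<Rightarrow> 'a list set \<Rightarrow> ('a set \<Rightarrow> real) set" where
  "cycle_polytope V E \<C> = {x.
      (\<forall>e. e \<notin> E \<longrightarrow> x e = 0) \<and>
      (\<forall>e\<in>E. 0 \<le> x e \<and> x e \<le> 1) \<and>
      (\<forall>i\<in>V. (\<Sum>e\<in>delta E i. x e) \<le> 1) \<and>
      (\<forall>C\<in>\<C>. (\<Sum>e\<in>cycle_edges C. x e) \<le> (real (length C) - 1) / 2)}"

definition extreme_point :: "('b \<Rightarrow> real) set \<Rightarrow> ('b \<Rightarrow> real) \<Rightarrow> bool" where
  "extreme_point P x \<longleftrightarrow> x \<in> P \<and>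
     (\<forall>y\<in>P. \<forall>z\<in>P. \<forall>t::real. 0 < t \<and> t < 1 \<and> y \<noteq> z \<longrightarrow> x \<noteq> (\<lambda>e. (1 - t) * y e + t * z e))"

definition half_integral :: "'b set \<Rightarrow> ('b \<Rightarrow> real) \<Rightarrow> bool" where
  "half_integral E x \<longleftrightarrow> (\<forall>e\<in>E. x e \<in> {0, 1/2, 1})"

end

theory Submission
  imports Defs
begin

text \<open>Let y be in the polytope, not half-integral, and call an edge fractional if 0 < y e < 1.
  On a tight cycle of fractional edges, every edge value is an alternating sum of the vertex
  slacks 1 - y e - y e' of the cycle, which add up to 1; as the cycle is odd, at least three of
  its vertices have positive slack, and so carry a further fractional edge. With the
  edge-disjointness of the cycles, double counting gives
  3 |tight cycles| + 2 |tight vertices| \<le> 2 |fractional edges|. Hence either the tight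
  constraints on the fractional edges have a nonzero solution direction d by linear algebra, or
  there is no tight cycle and each tight vertex meets exactly two fractional edges, and d = y - 1/2
  on the fractional edges works. Tight cycles through an edge of value 0 or 1 need no equation:
  pairing up the other edges shows that the cycle constraint follows from the degree constraints.
  So y \<plusminus> t d stays in the polytope for small t, and y is not extreme; moving as far as possible
  makes a further constraint tight, which by induction yields a half-integral optimum.\<close>

lemma homogeneous_system_nontrivial_solution:
  fixes r :: "'j \<Rightarrow> 'e \<Rightarrow> real"
  assumes "finite U" "finite J" "card J < card U"
  shows "\<exists>d. (\<forall>e. e \<notin> U \<longrightarrow> d e = 0) \<and> (\<exists>e\<in>U. d e \<noteq> 0) \<and>
             (\<forall>j\<in>J. (\<Sum>e\<in>U. r j e * d e) = 0)"
  using assms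
proof (induction U arbitrary: J r rule: finite_induct)
  case empty
  then show ?case by simp
next
  case (insert e0 U)
  show ?case
  proof (cases "\<forall>j\<in>J. r j e0 = 0")
    case True
    define d where "d = (\<lambda>e. if e = e0 then (1::real) else 0)"
    have "(\<Sum>e\<in>insert e0 U. r j e * d e) = 0" if "j \<in> J" for j
      using insert(1,2) True that by (simp add: d_def sum.insert_if if_distrib cong: if_cong)
    then show ?thesis by (intro exI[of _ d]) (auto simp: d_def)
  next
    case False
    then obtain j0 where j0: "j0 \<in> J" "r j0 e0 \<noteq> 0" by auto
    \<comment> \<open>Gaussian elimination of the unknown e0 via equation j0.\<close>
    define r' where "r' = (\<lambda>j e. r j e - (r j e0 / r j0 e0) * r j0 e)"
    have "card (J - {j0}) < card U"
      using insert j0 card_gt_0_iff[of J] by (auto simp: card_Diff_singleton)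
    with insert.IH[of "J - {j0}" r'] insert.prems
    obtain d' where d': "\<forall>e. e \<notin> U \<longrightarrow> d' e = 0" "\<exists>e\<in>U. d' e \<noteq> 0"
      "\<forall>j\<in>J - {j0}. (\<Sum>e\<in>U. r' j e * d' e) = 0" by auto
    define S0 where "S0 = (\<Sum>e\<in>U. r j0 e * d' e)"
    define d where "d = d'(e0 := - S0 / r j0 e0)"
    have sum_U: "(\<Sum>e\<in>U. r j e * d e) = (\<Sum>e\<in>U. r j e * d' e)" for j
      using insert(2) by (intro sum.cong) (auto simp: d_def)
    have d_e0: "d e0 = - S0 / r j0 e0" by (simp add: d_def)
    have "(\<Sum>e\<in>insert e0 U. r j e * d e) = 0" if j: "j \<in> J" for j
    proof (cases "j = j0")
      case True
      then show ?thesis using insert(1,2) j0 by (simp add: sum_U d_e0 S0_def[symmetric])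
    next
      case False
      have "(\<Sum>e\<in>U. r' j e * d' e) = (\<Sum>e\<in>U. r j e * d' e) - (r j e0 / r j0 e0) * S0"
        by (simp add: r'_def S0_def algebra_simps sum_subtractf sum_distrib_left)
      with d'(3) False j have "(\<Sum>e\<in>U. r j e * d' e) = (r j e0 / r j0 e0) * S0" by auto
      then show ?thesis using insert(1,2) j0 by (simp add: sum_U d_e0)
    qed
    moreover have "\<forall>e. e \<notin> insert e0 U \<longrightarrow> d e = 0" using d'(1) by (auto simp: d_def)
    moreover have "\<exists>e\<in>insert e0 U. d e \<noteq> 0" using d'(2) insert(2) by (auto simp: d_def)
    ultimately show ?thesis by blast
  qed
qed

lemma max_feasible_step:
  fixes K :: "(real \<times> real) set"
  assumes "finite K" and slack: "\<And>a b. (a, b) \<in> K \<Longrightarrow> 0 < a"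
    and "(a0, b0) \<in> K" "0 < b0"
  obtains l a b where "l > 0" "\<forall>t a' b'. 0 \<le> t \<and> t \<le> l \<and> (a', b') \<in> K \<longrightarrow> t * b' \<le> a'"
    and "(a, b) \<in> K" "0 < b" "l * b = a"
proof -
  define Q where "Q = (\<lambda>(a, b). a / b) ` {(a, b)\<in>K. 0 < b}"
  have "finite Q" unfolding Q_def by (rule finite_imageI, rule finite_subset[OF _ assms(1)]) auto
  moreover have "Q \<noteq> {}" using assms(3,4) by (auto simp: Q_def)
  ultimately have "Min Q \<in> Q" by simp
  then obtain a b where ab: "(a, b) \<in> K" "0 < b" "Min Q = a / b" by (auto simp: Q_def)
  have "t * b' \<le> a'" if t: "0 \<le> t" "t \<le> Min Q" and ab': "(a', b') \<in> K" for t a' b'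
  proof (cases "0 < b'")
    case True
    then have "a' / b' \<in> Q" using ab' by (force simp: Q_def)
    then have "Min Q \<le> a' / b'" using \<open>finite Q\<close> by simp
    then have "Min Q * b' \<le> a'" using True by (simp add: pos_le_divide_eq)
    moreover have "t * b' \<le> Min Q * b'" using t True by (simp add: mult_right_mono)
    ultimately show ?thesis by linarith
  next
    case False
    then have "t * b' \<le> 0" using t by (simp add: mult_nonneg_nonpos)
    moreover have "0 < a'" using slack[OF ab'] .
    ultimately show ?thesis by linarith
  qed
  then have "\<forall>t a' b'. 0 \<le> t \<and> t \<le> Min Q \<and> (a', b') \<in> K \<longrightarrow> t * b' \<le> a'" by blast
  moreover have "Min Q > 0" using ab slack by simp
  moreover have "Min Q * b = a" using ab by simp
  ultimately show thesis using that ab(1,2) by blast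
qed

lemma sum_alternating_telescope:
  fixes f :: "nat \<Rightarrow> real"
  shows "(\<Sum>m<N. (-1)^m * (f m + f (Suc m))) = f 0 - (-1)^N * f N"
  by (induction N) (auto simp: algebra_simps)

lemma sum_periodic_shift:
  fixes f :: "nat \<Rightarrow> real"
  assumes "\<And>i. f (i + n) = f i"
  shows "(\<Sum>m<n. f (j + m)) = (\<Sum>i<n. f i)"
proof (induction j)
  case (Suc j)
  have "(\<Sum>m<n. f (Suc j + m)) = (\<Sum>m<Suc n. f (j + m)) - f j"
    by (subst sum.lessThan_Suc_shift) simp
  also have "\<dots> = (\<Sum>m<n. f (j + m))" using assms[of j] by (simp add: add.commute)
  finally show ?case using Suc by simp
qed simp

lemma sum_lessThan_double_le:
  fixes f :: "nat \<Rightarrow> real"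
  assumes "\<And>i. f i + f (Suc i) \<le> 1"
  shows "(\<Sum>m<2 * k. f m) \<le> k"
proof (induction k)
  case (Suc k)
  have "(\<Sum>m<2 * Suc k. f m) = (\<Sum>m<2 * k. f m) + (f (2 * k) + f (Suc (2 * k)))" by simp
  then show ?case using Suc assms[of "2 * k"] by simp
qed simp

lemma alternating_sum_odd_period:
  fixes x s :: "nat \<Rightarrow> real"
  assumes "odd n" and period: "\<And>i. x (i + n) = x i" and s: "\<And>i. s i = 1 - x i - x (Suc i)"
  shows "2 * x j = 1 - (\<Sum>m<n. (-1)^m * s (j + m))"
proof -
  have ones: "(\<Sum>m<N. (-1::real)^m) = (if even N then 0 else 1)" for N
    by (induction N) auto
  have "(\<Sum>m<n. (-1)^m * s (j + m))
      = (\<Sum>m<n. (-1::real)^m) - (\<Sum>m<n. (-1)^m * (x (j + m) + x (Suc (j + m))))"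
    by (simp add: s sum_subtractf[symmetric] algebra_simps)
  also have "(\<Sum>m<n. (-1)^m * (x (j + m) + x (Suc (j + m)))) = 2 * x j"
    using sum_alternating_telescope[of "\<lambda>m. x (j + m)" n] period[of j] assms(1)
    by (simp add: add.commute)
  finally show ?thesis using ones[of n] assms(1) by simp
qed

lemma sum_odd_period_le_of_zero:
  fixes x :: "nat \<Rightarrow> real"
  assumes "odd n" and period: "\<And>i. x (i + n) = x i" and "x j = 0"
    and adjacent: "\<And>i. x i + x (Suc i) \<le> 1"
  shows "(\<Sum>i<n. x i) \<le> (real n - 1) / 2"
proof -
  obtain k where n: "n = Suc (2 * k)" using \<open>odd n\<close> by (metis oddE Suc_eq_plus1)
  have "(\<Sum>i<n. x i) = (\<Sum>m<n. x (Suc j + m))"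
    using sum_periodic_shift[of x n "Suc j", OF period] by simp
  also have "\<dots> = (\<Sum>m<2 * k. x (Suc j + m)) + x (j + n)" by (simp add: n)
  also have "x (j + n) = 0" using period \<open>x j = 0\<close> by simp
  also have "(\<Sum>m<2 * k. x (Suc j + m)) \<le> k"
    using adjacent by (intro sum_lessThan_double_le) simp
  finally show ?thesis using n by simp
qed

lemma alternating_sum_two_point_support:
  fixes s :: "nat \<Rightarrow> real"
  assumes "odd n" and period: "\<And>i. s (i + n) = s i" and "p < n" "q < n"
    and support: "\<And>i. s i \<noteq> 0 \<Longrightarrow> i mod n = p \<or> i mod n = q"
  shows "\<exists>j. (\<Sum>m<n. (-1)^m * s (j + m)) = (\<Sum>i<n. s i)"
proof -
  have mod_below_double: "a mod n = (if a < n then a else a - n)" if "a < 2 * n" for a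
    using that le_mod_geq[of n a] by auto
  \<comment> \<open>Started at the right one of p, q, the walk meets the support only after an even
    number of steps.\<close>
  have walk: "\<exists>j<n. \<forall>m<n. s (j + m) \<noteq> 0 \<longrightarrow> even m"
    if "p \<le> q" "q < n" and hyp: "\<And>i. s i \<noteq> 0 \<Longrightarrow> i mod n = p \<or> i mod n = q" for p q
  proof (cases "even (q - p)")
    case True
    have "even m" if "m < n" "s (p + m) \<noteq> 0" for m
    proof -
      have "(p + m) mod n = p \<or> (p + m) mod n = q" using that(2) hyp by blast
      then have "m = 0 \<or> m = q - p"
        using mod_below_double[of "p + m"] \<open>m < n\<close> \<open>p \<le> q\<close> \<open>q < n\<close> by (auto split: if_splits)
      then show ?thesis using True by auto
    qed
    then show ?thesis using \<open>p \<le> q\<close> \<open>q < n\<close> by (intro exI[of _ p]) auto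
  next
    case False
    have "even m" if "m < n" "s (q + m) \<noteq> 0" for m
    proof -
      have "(q + m) mod n = p \<or> (q + m) mod n = q" using that(2) hyp by blast
      moreover have "p \<noteq> q" using False by auto
      ultimately have "m = 0 \<or> m = n - (q - p)"
        using mod_below_double[of "q + m"] \<open>m < n\<close> \<open>p \<le> q\<close> \<open>q < n\<close> by (auto split: if_splits)
      then show ?thesis using False \<open>odd n\<close> \<open>q < n\<close> by auto
    qed
    then show ?thesis using \<open>q < n\<close> by (intro exI[of _ q]) auto
  qed
  have "\<exists>j<n. \<forall>m<n. s (j + m) \<noteq> 0 \<longrightarrow> even m"
  proof (cases "p \<le> q")
    case True
    show ?thesis by (rule walk[OF True \<open>q < n\<close> support])
  next
    case False
    have "\<And>i. s i \<noteq> 0 \<Longrightarrow> i mod n = q \<or> i mod n = p" using support by blast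
    then show ?thesis using walk[of q p] False \<open>p < n\<close> by simp
  qed
  then obtain j where "\<forall>m<n. s (j + m) \<noteq> 0 \<longrightarrow> even m" by blast
  then have "(\<Sum>m<n. (-1)^m * s (j + m)) = (\<Sum>m<n. s (j + m))"
    by (intro sum.cong) auto
  also have "\<dots> = (\<Sum>i<n. s i)" by (rule sum_periodic_shift[of s n j, OF period])
  finally show ?thesis ..
qed

lemma subset_doubleton_if_card_le_2:
  assumes "finite S" "card S \<le> 2" "S \<subseteq> A" "A \<noteq> {}"
  obtains a b where "a \<in> A" "b \<in> A" "S \<subseteq> {a, b}"
proof -
  consider "card S = 0" | "card S = 1" | "card S = 2" using assms(2) by linarith
  then show thesis
  proof cases
    case 1
    then show ?thesis using assms(1,4) that by auto
  next
    case 2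
    then obtain a where "S = {a}" by (rule card_1_singletonE)
    then show ?thesis using assms(3) that by auto
  next
    case 3
    then obtain a b where "S = {a, b}" by (auto simp: card_2_iff)
    then show ?thesis using assms(3) that by auto
  qed
qed

section \<open>Edges of a cycle\<close>

lemma Suc_mod_cancel:
  fixes a b n :: nat
  assumes "Suc a mod n = Suc b mod n"
  shows "a mod n = b mod n"
proof (cases "n = 0")
  case False
  have "c mod n = (Suc c mod n + (n - 1)) mod n" for c
  proof -
    have "Suc c + (n - 1) = c + n" using False by simp
    then show ?thesis by (metis mod_add_left_eq mod_add_self2)
  qed
  then show ?thesis using assms by metis
qed (use assms in simp)

definition cycle_edge :: "'a list \<Rightarrow> nat \<Rightarrow> 'a set" where
  "cycle_edge C i = {C ! (i mod length C), C ! (Suc i mod length C)}"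

definition cycle_edges_at :: "'a list \<Rightarrow> 'a \<Rightarrow> 'a set set" where
  "cycle_edges_at C v = {e \<in> cycle_edges C. v \<in> e}"

lemma cycle_edges_eq_image: "cycle_edges C = cycle_edge C ` {..<length C}"
  unfolding cycle_edges_def cycle_edge_def by (auto simp: mod_Suc_eq)

lemma finite_cycle_edges: "finite (cycle_edges C)"
  unfolding cycle_edges_eq_image by simp

lemma cycle_edge_mod: "cycle_edge C (i mod length C) = cycle_edge C i"
  unfolding cycle_edge_def by (simp add: mod_Suc_eq)

lemma cycle_edge_add_length: "cycle_edge C (i + length C) = cycle_edge C i"
  by (metis cycle_edge_mod mod_add_self2)

lemma cycle_edge_in_cycle_edges: "C \<noteq> [] \<Longrightarrow> cycle_edge C i \<in> cycle_edges C"
  unfolding cycle_edges_eq_image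
  by (metis cycle_edge_mod image_eqI lessThan_iff length_greater_0_conv mod_less_divisor)

lemma inj_on_cycle_edge:
  assumes "distinct C" "length C \<ge> 3"
  shows "inj_on (cycle_edge C) {..<length C}"
proof (rule inj_onI)
  let ?n = "length C"
  fix i j assume i: "i \<in> {..<?n}" and j: "j \<in> {..<?n}" and eq: "cycle_edge C i = cycle_edge C j"
  have "0 < ?n" using assms(2) by linarith
  then have "Suc i mod ?n < ?n" "Suc j mod ?n < ?n" by simp_all
  with eq i j assms(1) consider "i = j" | "i = Suc j mod ?n" "j = Suc i mod ?n"
    unfolding cycle_edge_def by (auto simp: doubleton_eq_iff nth_eq_iff_index_eq)
  then show "i = j"
  proof cases
    case 2
    \<comment> \<open>Two steps around the cycle would return to i, impossible on at least three vertices.\<close>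
    then have "Suc (Suc i) mod ?n = i mod ?n" using i by (simp add: mod_Suc_eq)
    then have "?n dvd 2" by (simp add: mod_eq_dvd_iff_nat)
    then show ?thesis using assms by (auto dest: dvd_imp_le)
  qed
qed

lemma cycle_edges_at_nth_Suc_mod:
  assumes "distinct C" "length C \<ge> 3"
  shows "cycle_edges_at C (C ! (Suc i mod length C)) = {cycle_edge C i, cycle_edge C (Suc i)}"
    and "cycle_edge C i \<noteq> cycle_edge C (Suc i)"
proof -
  let ?n = "length C"
  have n: "?n > 0" using assms by auto
  show "cycle_edge C i \<noteq> cycle_edge C (Suc i)"
  proof
    assume "cycle_edge C i = cycle_edge C (Suc i)"
    then have "i mod ?n = Suc i mod ?n"
      using inj_onD[OF inj_on_cycle_edge[OF assms], of "i mod ?n" "Suc i mod ?n"] n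
      by (simp add: cycle_edge_mod)
    then have "?n dvd Suc i - i" using mod_eq_dvd_iff_nat[of i "Suc i" ?n] by simp
    then show False using assms by simp
  qed
  have "e = cycle_edge C i \<or> e = cycle_edge C (Suc i)"
    if e: "e \<in> cycle_edges C" "C ! (Suc i mod ?n) \<in> e" for e
  proof -
    obtain j where j: "j < ?n" "e = cycle_edge C j"
      using e(1) unfolding cycle_edges_eq_image by auto
    have "Suc i mod ?n < ?n" "Suc j mod ?n < ?n" using n by auto
    then have "Suc i mod ?n = j \<or> Suc i mod ?n = Suc j mod ?n"
      using e(2) j assms(1) by (auto simp: cycle_edge_def nth_eq_iff_index_eq)
    then show ?thesis
      by (metis Suc_mod_cancel cycle_edge_mod j(2))
  qed
  moreover have "C ! (Suc i mod ?n) \<in> cycle_edge C i \<inter> cycle_edge C (Suc i)"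
    by (simp add: cycle_edge_def mod_Suc_eq)
  ultimately show "cycle_edges_at C (C ! (Suc i mod ?n)) = {cycle_edge C i, cycle_edge C (Suc i)}"
    using cycle_edge_in_cycle_edges[of C] n unfolding cycle_edges_at_def by auto
qed

lemma in_set_nth_Suc_modE:
  assumes "v \<in> set C"
  obtains p where "p < length C" "v = C ! (Suc p mod length C)"
proof -
  obtain k where k: "k < length C" "v = C ! k" using assms by (auto simp: in_set_conv_nth)
  show thesis
  proof (cases k)
    case 0
    then show ?thesis using k by (intro that[of "length C - 1"]) auto
  next
    case (Suc p)
    then show ?thesis using k by (intro that[of p]) auto
  qed
qed

lemma card_cycle_edges_at:
  assumes "distinct C" "length C \<ge> 3" "v \<in> set C"
  shows "card (cycle_edges_at C v) = 2"
  using cycle_edges_at_nth_Suc_mod[OF assms(1,2)] by (metis assms(3) card_2_iff in_set_nth_Suc_modE)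

locale odd_cycle_packing =
  fixes V :: "'a set" and E :: "'a set set" and \<C> :: "'a list set"
  assumes graph: "graph V E"
    and odd_cycles: "\<forall>C\<in>\<C>. is_odd_cycle V E C"
    and edge_disjoint: "\<forall>C\<in>\<C>. \<forall>D\<in>\<C>. C \<noteq> D \<longrightarrow> cycle_edges C \<inter> cycle_edges D = {}"
begin

abbreviation polytope :: "('a set \<Rightarrow> real) set" where
  "polytope \<equiv> cycle_polytope V E \<C>"

lemma finite_V: "finite V"
  using graph by (simp add: graph_def)

lemma edge_subset_V: "e \<in> E \<Longrightarrow> e \<subseteq> V"
  using graph by (simp add: graph_def)

lemma card_edge: "e \<in> E \<Longrightarrow> card e = 2"
  using graph by (simp add: graph_def)

lemma finite_E: "finite E"
  by (meson Pow_iff edge_subset_V finite_Pow_iff finite_V finite_subset subsetI)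

lemma finite_delta: "finite (delta E v)"
  using finite_E by (simp add: delta_def)

lemma cycle:
  assumes "C \<in> \<C>"
  shows "distinct C" "length C \<ge> 3" "odd (length C)" "set C \<subseteq> V" "cycle_edges C \<subseteq> E"
  using odd_cycles assms by (auto simp: is_odd_cycle_def is_cycle_def)

lemma finite_cycles: "finite \<C>"
proof -
  have "\<C> \<subseteq> {xs. set xs \<subseteq> V \<and> distinct xs}" using cycle by blast
  then show ?thesis using finite_subset_distinct[OF finite_V] finite_subset by blast
qed

lemma polytopeD:
  assumes "y \<in> polytope"
  shows "\<And>e. e \<notin> E \<Longrightarrow> y e = 0" "\<And>e. e \<in> E \<Longrightarrow> 0 \<le> y e \<and> y e \<le> 1"
    "\<And>v. v \<in> V \<Longrightarrow> (\<Sum>e\<in>delta E v. y e) \<le> 1"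
    "\<And>C. C \<in> \<C> \<Longrightarrow> (\<Sum>e\<in>cycle_edges C. y e) \<le> (real (length C) - 1) / 2"
  using assms by (auto simp: cycle_polytope_def)

definition degree_feasible :: "('a set \<Rightarrow> real) \<Rightarrow> bool" where
  "degree_feasible z \<longleftrightarrow> (\<forall>e\<in>E. 0 \<le> z e) \<and> (\<forall>v\<in>V. (\<Sum>e\<in>delta E v. z e) \<le> 1)"

lemma degree_feasible_if_polytope: "y \<in> polytope \<Longrightarrow> degree_feasible y"
  by (simp add: cycle_polytope_def degree_feasible_def)

lemma sum_cycle_edges_at_le:
  assumes "degree_feasible z" "C \<in> \<C>" "v \<in> V"
  shows "(\<Sum>e\<in>cycle_edges_at C v. z e) \<le> 1"
proof -
  have "cycle_edges_at C v \<subseteq> delta E v"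
    using cycle(5)[OF assms(2)] by (auto simp: cycle_edges_at_def delta_def)
  then have "(\<Sum>e\<in>cycle_edges_at C v. z e) \<le> (\<Sum>e\<in>delta E v. z e)"
    using assms(1) finite_delta by (intro sum_mono2) (auto simp: degree_feasible_def delta_def)
  then show ?thesis using assms by (auto simp: degree_feasible_def)
qed

lemma adjacent_cycle_edges_le:
  assumes "degree_feasible z" "C \<in> \<C>"
  shows "z (cycle_edge C i) + z (cycle_edge C (Suc i)) \<le> 1"
proof -
  have "length C > 0" using cycle(2)[OF assms(2)] by linarith
  then have "C ! (Suc i mod length C) \<in> V" using cycle(4)[OF assms(2)] by auto
  from sum_cycle_edges_at_le[OF assms this] show ?thesis
    using cycle_edges_at_nth_Suc_mod[OF cycle(1,2)[OF assms(2)], of i] by simp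
qed

lemma sum_cycle_edges_eq:
  assumes "C \<in> \<C>"
  shows "(\<Sum>e\<in>cycle_edges C. z e) = (\<Sum>i<length C. z (cycle_edge C i))"
  unfolding cycle_edges_eq_image using inj_on_cycle_edge[OF cycle(1,2)[OF assms]]
  by (simp add: sum.reindex)

lemma cycle_constraint_if_zero_edge:
  assumes "degree_feasible z" "C \<in> \<C>" "e0 \<in> cycle_edges C" "z e0 = 0"
  shows "(\<Sum>e\<in>cycle_edges C. z e) \<le> (real (length C) - 1) / 2"
proof -
  obtain j where "e0 = cycle_edge C j" using assms(3) unfolding cycle_edges_eq_image by auto
  then show ?thesis
    unfolding sum_cycle_edges_eq[OF assms(2)]
    using assms adjacent_cycle_edges_le[OF assms(1,2)] cycle(3)[OF assms(2)]
    by (intro sum_odd_period_le_of_zero[where j = j]) (simp_all add: cycle_edge_add_length)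
qed

section \<open>Admissible directions\<close>

definition fractional_edges :: "('a set \<Rightarrow> real) \<Rightarrow> 'a set set" where
  "fractional_edges y = {e \<in> E. 0 < y e \<and> y e < 1}"

definition tight_vertex :: "('a set \<Rightarrow> real) \<Rightarrow> 'a \<Rightarrow> bool" where
  "tight_vertex y v \<longleftrightarrow> (\<Sum>e\<in>delta E v. y e) = 1"

definition tight_cycle :: "('a set \<Rightarrow> real) \<Rightarrow> 'a list \<Rightarrow> bool" where
  "tight_cycle y C \<longleftrightarrow> (\<Sum>e\<in>cycle_edges C. y e) = (real (length C) - 1) / 2"

text \<open>Tight cycles through an edge of value 0 or 1 get no equation: moving keeps an edge of
  such a cycle at 0 (the edge itself, or the neighbour of an edge of value 1).\<close>

definition admissible_direction :: "('a set \<Rightarrow> real) \<Rightarrow> ('a set \<Rightarrow> real) \<Rightarrow> bool" where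
  "admissible_direction y d \<longleftrightarrow>
     (\<forall>e. e \<notin> fractional_edges y \<longrightarrow> d e = 0) \<and>
     (\<forall>v\<in>V. tight_vertex y v \<longrightarrow> (\<Sum>e\<in>delta E v. d e) = 0) \<and>
     (\<forall>C\<in>\<C>. tight_cycle y C \<and> cycle_edges C \<subseteq> fractional_edges y \<longrightarrow> (\<Sum>e\<in>cycle_edges C. d e) = 0)"

definition loose_vertices :: "('a set \<Rightarrow> real) \<Rightarrow> 'a set" where
  "loose_vertices y = {v \<in> V. \<not> tight_vertex y v}"

definition loose_cycles :: "('a set \<Rightarrow> real) \<Rightarrow> 'a list set" where
  "loose_cycles y = {C \<in> \<C>. \<not> tight_cycle y C \<and> cycle_edges C \<subseteq> fractional_edges y}"

definition looseness :: "('a set \<Rightarrow> real) \<Rightarrow> nat" where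
  "looseness y = card (fractional_edges y) + card (loose_vertices y) + card (loose_cycles y)"

definition move :: "('a set \<Rightarrow> real) \<Rightarrow> ('a set \<Rightarrow> real) \<Rightarrow> real \<Rightarrow> 'a set \<Rightarrow> real" where
  "move y d t = (\<lambda>e. y e + t * d e)"

lemma finite_fractional_edges: "finite (fractional_edges y)"
  using finite_E by (simp add: fractional_edges_def)

lemma admissible_direction_uminus: "admissible_direction y d \<Longrightarrow> admissible_direction y (\<lambda>e. - d e)"
  unfolding admissible_direction_def by (auto simp: sum_negf)

lemma sum_move: "(\<Sum>e\<in>S. move y d t e) = (\<Sum>e\<in>S. y e) + t * (\<Sum>e\<in>S. d e)"
  by (simp add: move_def sum.distrib sum_distrib_left)

lemma integral_if_not_fractional:
  "y \<in> polytope \<Longrightarrow> e \<in> E \<Longrightarrow> e \<notin> fractional_edges y \<Longrightarrow> y e = 0 \<or> y e = 1"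
  using polytopeD(2)[of y e] by (force simp: fractional_edges_def)

lemma move_in_polytope:
  assumes y: "y \<in> polytope" and d: "admissible_direction y d"
    and edges: "\<forall>e\<in>fractional_edges y. 0 \<le> move y d t e \<and> move y d t e \<le> 1"
    and vertices: "\<forall>v\<in>loose_vertices y. (\<Sum>e\<in>delta E v. move y d t e) \<le> 1"
    and cycles: "\<forall>C\<in>loose_cycles y. (\<Sum>e\<in>cycle_edges C. move y d t e) \<le> (real (length C) - 1) / 2"
  shows "move y d t \<in> polytope"
proof -
  let ?z = "move y d t"
  have d0: "\<And>e. e \<notin> fractional_edges y \<Longrightarrow> d e = 0"
    using d by (simp add: admissible_direction_def)
  have outside: "?z e = 0" if "e \<notin> E" for e
    using that polytopeD(1)[OF y] d0[of e] by (simp add: move_def fractional_edges_def)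
  have box: "0 \<le> ?z e \<and> ?z e \<le> 1" if "e \<in> E" for e
    using edges polytopeD(2)[OF y that] d0[of e]
    by (cases "e \<in> fractional_edges y") (auto simp: move_def)
  have degree: "(\<Sum>e\<in>delta E v. ?z e) \<le> 1" if "v \<in> V" for v
    using vertices d that by (cases "tight_vertex y v")
      (auto simp: sum_move tight_vertex_def admissible_direction_def loose_vertices_def)
  have "degree_feasible ?z" using box degree by (simp add: degree_feasible_def)
  have cycle_bound: "(\<Sum>e\<in>cycle_edges C. ?z e) \<le> (real (length C) - 1) / 2" if C: "C \<in> \<C>" for C
  proof (cases "cycle_edges C \<subseteq> fractional_edges y")
    case True
    then show ?thesis
      using cycles d C by (cases "tight_cycle y C")
        (auto simp: sum_move tight_cycle_def admissible_direction_def loose_cycles_def)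
  next
    case False
    then obtain e where e: "e \<in> cycle_edges C" "e \<notin> fractional_edges y" by auto
    have "e \<in> E" using e cycle(5)[OF C] by auto
    have "\<exists>e'\<in>cycle_edges C. ?z e' = 0"
    proof (cases "y e = 0")
      case True
      then have "?z e = 0" using d0[OF e(2)] by (simp add: move_def)
      then show ?thesis using e(1) by blast
    next
      case False
      then have "y e = 1" using integral_if_not_fractional[OF y \<open>e \<in> E\<close> e(2)] by simp
      obtain j where j: "e = cycle_edge C j" using e unfolding cycle_edges_eq_image by auto
      have "C \<noteq> []" using cycle(2)[OF C] by auto
      then have next_edge: "cycle_edge C (Suc j) \<in> cycle_edges C"
        by (rule cycle_edge_in_cycle_edges)
      then have "y (cycle_edge C (Suc j)) \<ge> 0" using polytopeD(2)[OF y] cycle(5)[OF C] by auto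
      then have "y (cycle_edge C (Suc j)) = 0"
        using adjacent_cycle_edges_le[OF degree_feasible_if_polytope[OF y] C, of j] \<open>y e = 1\<close> j
        by simp
      then have "?z (cycle_edge C (Suc j)) = 0"
        using d0[of "cycle_edge C (Suc j)"] by (simp add: move_def fractional_edges_def)
      then show ?thesis using next_edge by blast
    qed
    then show ?thesis using cycle_constraint_if_zero_edge[OF \<open>degree_feasible ?z\<close> C] by blast
  qed
  show ?thesis unfolding cycle_polytope_def using outside box degree cycle_bound by blast
qed

lemma looseness_move_less:
  assumes "admissible_direction y d"
    and "fractional_edges (move y d t) \<noteq> fractional_edges y
      \<or> loose_vertices (move y d t) \<noteq> loose_vertices y \<or> loose_cycles (move y d t) \<noteq> loose_cycles y"
  shows "looseness (move y d t) < looseness y"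
proof -
  let ?z = "move y d t"
  have "\<And>e. e \<notin> fractional_edges y \<Longrightarrow> d e = 0"
    using assms(1) by (simp add: admissible_direction_def)
  then have sub_F: "fractional_edges ?z \<subseteq> fractional_edges y"
    by (force simp: fractional_edges_def move_def)
  have sub_V: "loose_vertices ?z \<subseteq> loose_vertices y"
    using assms(1)
    by (auto simp: loose_vertices_def tight_vertex_def admissible_direction_def sum_move)
  have sub_C: "loose_cycles ?z \<subseteq> loose_cycles y"
    using assms(1) sub_F
    by (fastforce simp: loose_cycles_def tight_cycle_def admissible_direction_def sum_move)
  have fin: "finite (fractional_edges y)" "finite (loose_vertices y)" "finite (loose_cycles y)"
    using finite_fractional_edges finite_V finite_cycles
    by (simp_all add: loose_vertices_def loose_cycles_def)
  have "card (fractional_edges ?z) \<le> card (fractional_edges y)"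
    "card (loose_vertices ?z) \<le> card (loose_vertices y)"
    "card (loose_cycles ?z) \<le> card (loose_cycles y)"
    using sub_F sub_V sub_C fin by (simp_all add: card_mono)
  moreover have "card (fractional_edges ?z) < card (fractional_edges y)
      \<or> card (loose_vertices ?z) < card (loose_vertices y)
      \<or> card (loose_cycles ?z) < card (loose_cycles y)"
    using assms(2) sub_F sub_V sub_C fin by (metis psubsetI psubset_card_mono)
  ultimately show ?thesis unfolding looseness_def by linarith
qed

text \<open>A pair (a, b) stands for the constraint t * b \<le> a on the step length t of a move along d.\<close>

definition step_constraints :: "('a set \<Rightarrow> real) \<Rightarrow> ('a set \<Rightarrow> real) \<Rightarrow> (real \<times> real) set" where
  "step_constraints y d =
     (\<lambda>e. (y e, - d e)) ` fractional_edges y \<union> (\<lambda>e. (1 - y e, d e)) ` fractional_edges y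
     \<union> (\<lambda>v. (1 - (\<Sum>e\<in>delta E v. y e), \<Sum>e\<in>delta E v. d e)) ` loose_vertices y
     \<union> (\<lambda>C. ((real (length C) - 1) / 2 - (\<Sum>e\<in>cycle_edges C. y e), \<Sum>e\<in>cycle_edges C. d e))
         ` loose_cycles y"

lemma finite_step_constraints: "finite (step_constraints y d)"
  using finite_fractional_edges finite_V finite_cycles
  by (simp add: step_constraints_def loose_vertices_def loose_cycles_def)

lemma step_constraints_slack_pos:
  "y \<in> polytope \<Longrightarrow> (a, b) \<in> step_constraints y d \<Longrightarrow> 0 < a"
  unfolding step_constraints_def using polytopeD(3,4)[of y]
  by (auto simp: fractional_edges_def loose_vertices_def tight_vertex_def loose_cycles_def
      tight_cycle_def less_le)

lemma move_in_polytope_if_step_constraints: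
  assumes y: "y \<in> polytope" and d: "admissible_direction y d"
    and below: "\<And>a b. (a, b) \<in> step_constraints y d \<Longrightarrow> t * b \<le> a"
  shows "move y d t \<in> polytope"
proof (rule move_in_polytope[OF y d])
  show "\<forall>e\<in>fractional_edges y. 0 \<le> move y d t e \<and> move y d t e \<le> 1"
  proof
    fix e assume "e \<in> fractional_edges y"
    then have "(y e, - d e) \<in> step_constraints y d" "(1 - y e, d e) \<in> step_constraints y d"
      by (auto simp: step_constraints_def)
    from below[OF this(1)] below[OF this(2)] show "0 \<le> move y d t e \<and> move y d t e \<le> 1"
      by (simp add: move_def)
  qed
  show "\<forall>v\<in>loose_vertices y. (\<Sum>e\<in>delta E v. move y d t e) \<le> 1"
  proof
    fix v assume "v \<in> loose_vertices y"
    then have "(1 - (\<Sum>e\<in>delta E v. y e), \<Sum>e\<in>delta E v. d e) \<in> step_constraints y d"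
      by (auto simp: step_constraints_def)
    from below[OF this] show "(\<Sum>e\<in>delta E v. move y d t e) \<le> 1" by (simp add: sum_move)
  qed
  show "\<forall>C\<in>loose_cycles y. (\<Sum>e\<in>cycle_edges C. move y d t e) \<le> (real (length C) - 1) / 2"
  proof
    fix C assume "C \<in> loose_cycles y"
    then have "((real (length C) - 1) / 2 - (\<Sum>e\<in>cycle_edges C. y e), \<Sum>e\<in>cycle_edges C. d e)
        \<in> step_constraints y d"
      by (auto simp: step_constraints_def)
    from below[OF this] show "(\<Sum>e\<in>cycle_edges C. move y d t e) \<le> (real (length C) - 1) / 2"
      unfolding sum_move by linarith
  qed
qed

lemma looseness_move_less_if_step_constraint_tight:
  assumes d: "admissible_direction y d" and "(a, b) \<in> step_constraints y d" "t * b = a"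
  shows "looseness (move y d t) < looseness y"
proof (rule looseness_move_less[OF d])
  let ?z = "move y d t"
  from assms(2) show "fractional_edges ?z \<noteq> fractional_edges y
      \<or> loose_vertices ?z \<noteq> loose_vertices y \<or> loose_cycles ?z \<noteq> loose_cycles y"
    unfolding step_constraints_def
  proof (elim UnE imageE)
    fix e assume "(a, b) = (y e, - d e)" "e \<in> fractional_edges y"
    then have "?z e = 0" using \<open>t * b = a\<close> by (simp add: move_def)
    then have "e \<notin> fractional_edges ?z" by (simp add: fractional_edges_def)
    then show ?thesis using \<open>e \<in> fractional_edges y\<close> by blast
  next
    fix e assume "(a, b) = (1 - y e, d e)" "e \<in> fractional_edges y"
    then have "?z e = 1" using \<open>t * b = a\<close> by (simp add: move_def)
    then have "e \<notin> fractional_edges ?z" by (simp add: fractional_edges_def)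
    then show ?thesis using \<open>e \<in> fractional_edges y\<close> by blast
  next
    fix v assume "(a, b) = (1 - (\<Sum>e\<in>delta E v. y e), \<Sum>e\<in>delta E v. d e)" "v \<in> loose_vertices y"
    then have "tight_vertex ?z v" using \<open>t * b = a\<close> by (simp add: sum_move tight_vertex_def)
    then show ?thesis using \<open>v \<in> loose_vertices y\<close> by (auto simp: loose_vertices_def)
  next
    fix C
    assume "(a, b) = ((real (length C) - 1) / 2 - (\<Sum>e\<in>cycle_edges C. y e), \<Sum>e\<in>cycle_edges C. d e)"
      and "C \<in> loose_cycles y"
    then have "tight_cycle ?z C" using \<open>t * b = a\<close> by (simp add: sum_move tight_cycle_def)
    then show ?thesis using \<open>C \<in> loose_cycles y\<close> by (auto simp: loose_cycles_def)
  qed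
qed

lemma maximal_move:
  assumes y: "y \<in> polytope" and d: "admissible_direction y d" and "d e0 \<noteq> 0"
  shows "\<exists>l>0. (\<forall>t. 0 \<le> t \<and> t \<le> l \<longrightarrow> move y d t \<in> polytope) \<and> looseness (move y d l) < looseness y"
proof -
  let ?K = "step_constraints y d"
  have "e0 \<in> fractional_edges y" using d \<open>d e0 \<noteq> 0\<close> by (auto simp: admissible_direction_def)
  then have "(y e0, - d e0) \<in> ?K" "(1 - y e0, d e0) \<in> ?K" by (auto simp: step_constraints_def)
  then obtain a0 b0 where rate: "(a0, b0) \<in> ?K" "0 < b0"
    using \<open>d e0 \<noteq> 0\<close> by (cases "d e0 < 0") auto
  obtain l a b where "l > 0" and within: "\<forall>t a' b'. 0 \<le> t \<and> t \<le> l \<and> (a', b') \<in> ?K \<longrightarrow> t * b' \<le> a'"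
    and "(a, b) \<in> ?K" "0 < b" "l * b = a"
    by (rule max_feasible_step[OF finite_step_constraints step_constraints_slack_pos[OF y] rate])
  have "move y d t \<in> polytope" if "0 \<le> t" "t \<le> l" for t
    using move_in_polytope_if_step_constraints[OF y d] within that by blast
  moreover have "looseness (move y d l) < looseness y"
    using looseness_move_less_if_step_constraint_tight[OF d \<open>(a, b) \<in> ?K\<close> \<open>l * b = a\<close>] .
  ultimately show ?thesis using \<open>l > 0\<close> by blast
qed

section \<open>Slacks of a tight odd cycle\<close>

definition cycle_slack :: "('a set \<Rightarrow> real) \<Rightarrow> 'a list \<Rightarrow> 'a \<Rightarrow> real" where
  "cycle_slack y C v = 1 - (\<Sum>e\<in>cycle_edges_at C v. y e)"

lemma cycle_slack_nonneg: "y \<in> polytope \<Longrightarrow> C \<in> \<C> \<Longrightarrow> v \<in> set C \<Longrightarrow> 0 \<le> cycle_slack y C v"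
  using sum_cycle_edges_at_le[OF degree_feasible_if_polytope, of y C v] cycle(4)[of C]
  by (auto simp: cycle_slack_def)

lemma cycle_slack_nth_Suc_mod:
  "C \<in> \<C> \<Longrightarrow> cycle_slack y C (C ! (Suc i mod length C))
     = 1 - y (cycle_edge C i) - y (cycle_edge C (Suc i))"
  using cycle_edges_at_nth_Suc_mod[OF cycle(1,2), of C i] by (simp add: cycle_slack_def)

lemma sum_slacks_tight_cycle:
  assumes C: "C \<in> \<C>" and "tight_cycle y C"
  shows "(\<Sum>i<length C. 1 - y (cycle_edge C i) - y (cycle_edge C (Suc i))) = 1"
proof -
  let ?n = "length C"
  define x where "x i = y (cycle_edge C i)" for i
  have "x (i + ?n) = x i" for i by (simp add: x_def cycle_edge_add_length)
  then have "(\<Sum>i<?n. x (Suc i)) = (\<Sum>i<?n. x i)"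
    using sum_periodic_shift[of x ?n 1] by simp
  then have "(\<Sum>i<?n. 1 - x i - x (Suc i)) = ?n - 2 * (\<Sum>i<?n. x i)"
    by (simp add: sum_subtractf)
  also have "(\<Sum>i<?n. x i) = (real ?n - 1) / 2"
    using \<open>tight_cycle y C\<close> sum_cycle_edges_eq[OF C, of y] by (simp add: tight_cycle_def x_def)
  finally show ?thesis by (simp add: field_simps x_def)
qed

text \<open>If only two vertices had positive slack, the alternating sum of slacks started at a
  suitable one of them would give some edge the value 0.\<close>

lemma three_slack_vertices:
  assumes y: "y \<in> polytope" and C: "C \<in> \<C>" and "tight_cycle y C"
    and fractional: "cycle_edges C \<subseteq> fractional_edges y"
  shows "3 \<le> card {v \<in> set C. 0 < cycle_slack y C v}"
proof (rule ccontr)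
  let ?n = "length C" and ?S = "{v \<in> set C. 0 < cycle_slack y C v}"
  define x where "x i = y (cycle_edge C i)" for i
  define s where "s i = 1 - x i - x (Suc i)" for i
  have n: "0 < ?n" "odd ?n" "distinct C" using cycle[OF C] by auto
  assume "\<not> 3 \<le> card ?S"
  moreover have "set C \<noteq> {}" using n by auto
  ultimately obtain a b where "a \<in> set C" "b \<in> set C" and S: "?S \<subseteq> {a, b}"
    using subset_doubleton_if_card_le_2[of ?S "set C"] by fastforce
  then obtain p q where pq: "p < ?n" "q < ?n" "a = C ! (Suc p mod ?n)" "b = C ! (Suc q mod ?n)"
    by (metis in_set_nth_Suc_modE)
  have period: "x (i + ?n) = x i" for i by (simp add: x_def cycle_edge_add_length)
  have slack_s: "cycle_slack y C (C ! (Suc i mod ?n)) = s i" for i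
    using cycle_slack_nth_Suc_mod[OF C] by (simp add: s_def x_def)
  have support: "i mod ?n = p \<or> i mod ?n = q" if "s i \<noteq> 0" for i
  proof -
    have "C ! (Suc i mod ?n) \<in> set C" using n by simp
    moreover from this have "0 < s i"
      using cycle_slack_nonneg[OF y C] slack_s that by (metis order_le_neq_trans)
    ultimately have "C ! (Suc i mod ?n) \<in> {a, b}" using S slack_s by auto
    then have "Suc i mod ?n = Suc p mod ?n \<or> Suc i mod ?n = Suc q mod ?n"
      using pq n by (auto simp: nth_eq_iff_index_eq)
    then show ?thesis using pq(1,2) by (metis Suc_mod_cancel mod_less)
  qed
  have sum_s: "(\<Sum>i<?n. s i) = 1"
    using sum_slacks_tight_cycle[OF C \<open>tight_cycle y C\<close>] by (simp add: s_def x_def)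
  have "s (i + ?n) = s i" for i
    using period[of i] period[of "Suc i"] by (simp add: s_def)
  then obtain j where "(\<Sum>m<?n. (-1)^m * s (j + m)) = (\<Sum>i<?n. s i)"
    using alternating_sum_two_point_support[OF n(2) _ pq(1,2) support] by blast
  moreover have "2 * x j = 1 - (\<Sum>m<?n. (-1)^m * s (j + m))"
    by (rule alternating_sum_odd_period[of ?n x s, OF n(2) period s_def])
  ultimately have "x j = 0" using sum_s by simp
  moreover have "cycle_edge C j \<in> fractional_edges y"
    using fractional cycle_edge_in_cycle_edges[of C j] n by auto
  ultimately show False by (simp add: x_def fractional_edges_def)
qed

section \<open>Counting tight constraints\<close>

definition tight_fractional_vertices :: "('a set \<Rightarrow> real) \<Rightarrow> 'a set" where
  "tight_fractional_vertices y = {v \<in> V. tight_vertex y v \<and> delta E v \<inter> fractional_edges y \<noteq> {}}"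

definition tight_fractional_cycles :: "('a set \<Rightarrow> real) \<Rightarrow> 'a list set" where
  "tight_fractional_cycles y = {C \<in> \<C>. tight_cycle y C \<and> cycle_edges C \<subseteq> fractional_edges y}"

definition fractional_degree :: "('a set \<Rightarrow> real) \<Rightarrow> 'a \<Rightarrow> nat" where
  "fractional_degree y v = card (delta E v \<inter> fractional_edges y)"

definition excess :: "('a set \<Rightarrow> real) \<Rightarrow> 'a \<Rightarrow> nat" where
  "excess y v = fractional_degree y v - (if v \<in> tight_fractional_vertices y then 2 else 0)"

lemma sum_fractional_delta_if_tight:
  assumes y: "y \<in> polytope" and "v \<in> V" "tight_vertex y v"
    and f: "f \<in> delta E v \<inter> fractional_edges y"
  shows "(\<Sum>e\<in>delta E v \<inter> fractional_edges y. y e) = 1"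
proof -
  have nonneg: "\<And>e. e \<in> delta E v \<Longrightarrow> 0 \<le> y e" using polytopeD(2)[OF y] by (auto simp: delta_def)
  \<comment> \<open>An edge of value 1 at v would leave no room for the fractional edge f.\<close>
  have zero: "y g = 0" if g: "g \<in> delta E v - fractional_edges y" for g
  proof (rule ccontr)
    assume "y g \<noteq> 0"
    moreover have "g \<in> E" using g by (auto simp: delta_def)
    ultimately have "y g = 1" using integral_if_not_fractional[OF y] g by auto
    have "f \<noteq> g" using f g by auto
    then have "y f + y g \<le> (\<Sum>e\<in>delta E v. y e)"
      using f g finite_delta nonneg sum_mono2[of "delta E v" "{f, g}" y] by auto
    moreover have "y f > 0" using f by (simp add: fractional_edges_def)
    ultimately show False using \<open>y g = 1\<close> \<open>tight_vertex y v\<close> by (simp add: tight_vertex_def)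
  qed
  have "(\<Sum>e\<in>delta E v. y e)
      = (\<Sum>e\<in>delta E v \<inter> fractional_edges y. y e) + (\<Sum>e\<in>delta E v - fractional_edges y. y e)"
    using finite_delta by (rule sum.Int_Diff)
  then show ?thesis using zero \<open>tight_vertex y v\<close> by (simp add: tight_vertex_def)
qed

lemma two_le_fractional_degree:
  assumes "y \<in> polytope" "v \<in> tight_fractional_vertices y"
  shows "2 \<le> fractional_degree y v"
proof (rule ccontr)
  let ?D = "delta E v \<inter> fractional_edges y"
  assume "\<not> 2 \<le> fractional_degree y v"
  moreover have "?D \<noteq> {}" "finite ?D"
    using assms(2) finite_delta by (auto simp: tight_fractional_vertices_def)
  moreover have "card ?D \<noteq> 0" using \<open>?D \<noteq> {}\<close> \<open>finite ?D\<close> by simp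
  ultimately have "card ?D = 1" unfolding fractional_degree_def by linarith
  then obtain f where f: "?D = {f}" by (rule card_1_singletonE)
  then have "y f = 1" using sum_fractional_delta_if_tight[OF assms(1), of v f] assms(2)
    by (auto simp: tight_fractional_vertices_def)
  moreover have "y f < 1" using f by (auto simp: fractional_edges_def)
  ultimately show False by simp
qed

lemma sum_fractional_degree: "(\<Sum>v\<in>V. fractional_degree y v) = 2 * card (fractional_edges y)"
proof -
  have "(\<Sum>v\<in>V. fractional_degree y v) = (\<Sum>v\<in>V. \<Sum>e\<in>{e \<in> fractional_edges y. v \<in> e}. (1::nat))"
    by (intro sum.cong) (auto simp: fractional_degree_def delta_def fractional_edges_def
        intro!: arg_cong[where f = card])
  also have "\<dots> = (\<Sum>e\<in>fractional_edges y. \<Sum>v\<in>{v \<in> V. v \<in> e}. (1::nat))"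
    by (rule sum.swap_restrict[OF finite_V finite_fractional_edges])
  also have "\<dots> = (\<Sum>e\<in>fractional_edges y. 2)"
  proof (rule sum.cong[OF refl])
    fix e assume "e \<in> fractional_edges y"
    then have "e \<in> E" by (simp add: fractional_edges_def)
    then have "{v \<in> V. v \<in> e} = e" "card e = 2" using edge_subset_V card_edge by auto
    then show "(\<Sum>v\<in>{v \<in> V. v \<in> e}. (1::nat)) = 2" by simp
  qed
  finally show ?thesis by simp
qed

lemma card_slack_cycles_le_excess:
  assumes y: "y \<in> polytope" and v: "v \<in> V"
  shows "card {C \<in> tight_fractional_cycles y. v \<in> set C \<and> 0 < cycle_slack y C v} \<le> excess y v"
proof -
  define A where "A = {C \<in> tight_fractional_cycles y. v \<in> set C}"
  define S where "S = {C \<in> tight_fractional_cycles y. v \<in> set C \<and> 0 < cycle_slack y C v}"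
  have "finite A" using finite_cycles by (simp add: A_def tight_fractional_cycles_def)
  have "S \<subseteq> A" by (auto simp: S_def A_def)
  then have "card S \<le> card A" using \<open>finite A\<close> by (rule card_mono[rotated])
  have at_v: "cycle_edges_at C v \<subseteq> delta E v \<inter> fractional_edges y" if "C \<in> A" for C
    using that cycle(5)
    by (auto simp: A_def tight_fractional_cycles_def cycle_edges_at_def delta_def)
  have finite_at: "finite (cycle_edges_at C v)" for C
    using finite_cycle_edges[of C] by (simp add: cycle_edges_at_def)
  have two: "card (cycle_edges_at C v) = 2" if "C \<in> A" for C
    using that card_cycle_edges_at[OF cycle(1,2)] by (auto simp: A_def tight_fractional_cycles_def)
  \<comment> \<open>The cycles through v are edge-disjoint, and each uses two fractional edges at v.\<close>
  have "2 * card A = card (\<Union>C\<in>A. cycle_edges_at C v)"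
  proof -
    have "card (\<Union>C\<in>A. cycle_edges_at C v) = (\<Sum>C\<in>A. card (cycle_edges_at C v))"
      using \<open>finite A\<close> finite_at edge_disjoint
      by (intro card_UN_disjoint) (auto simp: cycle_edges_at_def A_def tight_fractional_cycles_def)
    then show ?thesis using two by simp
  qed
  also have "\<dots> \<le> fractional_degree y v"
    unfolding fractional_degree_def using at_v finite_delta by (intro card_mono) auto
  finally have A_le: "2 * card A \<le> fractional_degree y v" .
  show ?thesis
  proof (cases "v \<in> tight_fractional_vertices y \<and> S \<noteq> {}")
    case True
    then obtain C where "C \<in> S" "tight_vertex y v" by (auto simp: tight_fractional_vertices_def)
    then have "C \<in> A" using \<open>S \<subseteq> A\<close> by auto
    obtain f where f: "f \<in> cycle_edges_at C v"
      using two[OF \<open>C \<in> A\<close>] by (metis card.empty ex_in_conv zero_neq_numeral)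
    have "(\<Sum>e\<in>delta E v \<inter> fractional_edges y. y e) = 1"
      using sum_fractional_delta_if_tight[OF y v \<open>tight_vertex y v\<close>] f at_v[OF \<open>C \<in> A\<close>] by blast
    moreover have "(\<Sum>e\<in>cycle_edges_at C v. y e) < 1"
      using \<open>C \<in> S\<close> by (simp add: S_def cycle_slack_def)
    ultimately have "cycle_edges_at C v \<subset> delta E v \<inter> fractional_edges y"
      using at_v[OF \<open>C \<in> A\<close>] by auto
    then have "card (cycle_edges_at C v) < fractional_degree y v"
      unfolding fractional_degree_def using finite_delta by (intro psubset_card_mono) auto
    then have "3 \<le> fractional_degree y v" using two[OF \<open>C \<in> A\<close>] by simp
    then show ?thesis using A_le \<open>card S \<le> card A\<close> True by (simp add: excess_def S_def)
  next
    case False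
    then have "S = {} \<or> v \<notin> tight_fractional_vertices y" by blast
    then show ?thesis using A_le \<open>card S \<le> card A\<close> unfolding S_def[symmetric] excess_def by auto
  qed
qed

lemma three_card_tight_fractional_cycles_le:
  assumes "y \<in> polytope"
  shows "3 * card (tight_fractional_cycles y) \<le> (\<Sum>v\<in>V. excess y v)"
proof -
  let ?R = "tight_fractional_cycles y"
  have "finite ?R" using finite_cycles by (simp add: tight_fractional_cycles_def)
  have "3 * card ?R = (\<Sum>C\<in>?R. 3)" by simp
  also have "\<dots> \<le> (\<Sum>C\<in>?R. card {v \<in> V. v \<in> set C \<and> 0 < cycle_slack y C v})"
  proof (rule sum_mono)
    fix C assume C: "C \<in> ?R"
    then have "{v \<in> V. v \<in> set C \<and> 0 < cycle_slack y C v} = {v \<in> set C. 0 < cycle_slack y C v}"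
      using cycle(4) by (auto simp: tight_fractional_cycles_def)
    then show "3 \<le> card {v \<in> V. v \<in> set C \<and> 0 < cycle_slack y C v}"
      using three_slack_vertices[OF assms] C by (simp add: tight_fractional_cycles_def)
  qed
  also have "\<dots> = (\<Sum>v\<in>V. card {C \<in> ?R. v \<in> set C \<and> 0 < cycle_slack y C v})"
    using sum.swap_restrict[OF \<open>finite ?R\<close> finite_V, of "\<lambda>_ _. 1::nat"] by simp
  also have "\<dots> \<le> (\<Sum>v\<in>V. excess y v)"
    by (rule sum_mono) (rule card_slack_cycles_le_excess[OF assms])
  finally show ?thesis .
qed

lemma sum_excess:
  assumes "y \<in> polytope"
  shows "(\<Sum>v\<in>V. excess y v) + 2 * card (tight_fractional_vertices y)
    = 2 * card (fractional_edges y)"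
proof -
  let ?T = "tight_fractional_vertices y"
  have "?T \<subseteq> V" by (auto simp: tight_fractional_vertices_def)
  then have "2 * card ?T = (\<Sum>v\<in>V. if v \<in> ?T then 2 else 0)"
    using finite_V by (simp add: sum.If_cases Int_absorb1)
  moreover have "excess y v + (if v \<in> ?T then 2 else 0) = fractional_degree y v" for v
    using two_le_fractional_degree[OF assms, of v] by (simp add: excess_def)
  ultimately show ?thesis using sum_fractional_degree[of y] by (simp add: sum.distrib[symmetric])
qed

lemma sum_delta_fractional:
  assumes "\<forall>e. e \<notin> fractional_edges y \<longrightarrow> d e = 0"
  shows "(\<Sum>e\<in>delta E v. d e) = (\<Sum>e\<in>delta E v \<inter> fractional_edges y. d e)"
  by (rule sum.mono_neutral_right) (use finite_delta assms in auto)

lemma admissible_direction_if_few_tight: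
  assumes "card (tight_fractional_vertices y) + card (tight_fractional_cycles y)
    < card (fractional_edges y)"
  shows "\<exists>d e0. admissible_direction y d \<and> d e0 \<noteq> 0"
proof -
  let ?F = "fractional_edges y" and ?T = "tight_fractional_vertices y"
    and ?R = "tight_fractional_cycles y"
  have "finite ?T" "finite ?R"
    using finite_V finite_cycles
    by (simp_all add: tight_fractional_vertices_def tight_fractional_cycles_def)
  \<comment> \<open>One homogeneous equation per tight vertex and per tight cycle, in the unknowns d e, e \<in> F.\<close>
  define r :: "'a + 'a list \<Rightarrow> 'a set \<Rightarrow> real" where
    "r j e = (case j of
       Inl v \<Rightarrow> if v \<in> e then 1 else 0
     | Inr C \<Rightarrow> if e \<in> cycle_edges C then 1 else 0)"
    for j e
  have "card (?T <+> ?R) < card ?F" using assms \<open>finite ?T\<close> \<open>finite ?R\<close> by (simp add: card_Plus)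
  then obtain d where d0: "\<forall>e. e \<notin> ?F \<longrightarrow> d e = 0" and "\<exists>e\<in>?F. d e \<noteq> 0"
    and equations: "\<forall>j\<in>?T <+> ?R. (\<Sum>e\<in>?F. r j e * d e) = 0"
    using homogeneous_system_nontrivial_solution[OF finite_fractional_edges, of "?T <+> ?R" y r]
      \<open>finite ?T\<close> \<open>finite ?R\<close> by auto
  have "(\<Sum>e\<in>delta E v. d e) = 0" if v: "v \<in> V" "tight_vertex y v" for v
  proof (cases "v \<in> ?T")
    case True
    have "(\<Sum>e\<in>?F. r (Inl v) e * d e) = (\<Sum>e\<in>{e \<in> ?F. v \<in> e}. d e)"
      unfolding sum.inter_filter[OF finite_fractional_edges] by (intro sum.cong) (auto simp: r_def)
    also have "{e \<in> ?F. v \<in> e} = delta E v \<inter> ?F" by (auto simp: delta_def fractional_edges_def)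
    moreover have "(\<Sum>e\<in>?F. r (Inl v) e * d e) = 0" using equations True by blast
    ultimately show ?thesis using sum_delta_fractional[OF d0] by simp
  next
    case False
    then show ?thesis
      using v sum_delta_fractional[OF d0] by (simp add: tight_fractional_vertices_def)
  qed
  moreover have "(\<Sum>e\<in>cycle_edges C. d e) = 0" if C: "C \<in> ?R" for C
  proof -
    have "(\<Sum>e\<in>?F. r (Inr C) e * d e) = (\<Sum>e\<in>{e \<in> ?F. e \<in> cycle_edges C}. d e)"
      unfolding sum.inter_filter[OF finite_fractional_edges] by (intro sum.cong) (auto simp: r_def)
    also have "{e \<in> ?F. e \<in> cycle_edges C} = cycle_edges C"
      using C by (auto simp: tight_fractional_cycles_def)
    moreover have "(\<Sum>e\<in>?F. r (Inr C) e * d e) = 0" using equations C by blast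
    ultimately show ?thesis by simp
  qed
  ultimately have "admissible_direction y d"
    using d0 by (auto simp: admissible_direction_def tight_fractional_cycles_def)
  then show ?thesis using \<open>\<exists>e\<in>?F. d e \<noteq> 0\<close> by blast
qed

lemma admissible_direction_half_shift:
  assumes y: "y \<in> polytope" and "tight_fractional_cycles y = {}" and "\<forall>v\<in>V. excess y v = 0"
  shows "admissible_direction y (\<lambda>e. if e \<in> fractional_edges y then y e - 1/2 else 0)"
proof -
  let ?F = "fractional_edges y"
  define d where "d e = (if e \<in> ?F then y e - 1/2 else 0)" for e
  have d0: "\<forall>e. e \<notin> ?F \<longrightarrow> d e = 0" by (simp add: d_def)
  have "(\<Sum>e\<in>delta E v. d e) = 0" if v: "v \<in> V" "tight_vertex y v" for v
  proof (cases "v \<in> tight_fractional_vertices y")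
    case True
    then obtain f where f: "f \<in> delta E v \<inter> ?F" by (auto simp: tight_fractional_vertices_def)
    have "excess y v = 0" using assms(3) v(1) by blast
    then have "card (delta E v \<inter> ?F) = 2"
      using two_le_fractional_degree[OF y True] True by (simp add: excess_def fractional_degree_def)
    moreover have "(\<Sum>e\<in>delta E v \<inter> ?F. y e) = 1"
      by (rule sum_fractional_delta_if_tight[OF y v f])
    ultimately have "(\<Sum>e\<in>delta E v \<inter> ?F. y e - 1/2) = 0" by (simp add: sum_subtractf)
    then show ?thesis using sum_delta_fractional[OF d0] by (simp add: d_def)
  next
    case False
    then show ?thesis
      using v sum_delta_fractional[OF d0] by (simp add: tight_fractional_vertices_def)
  qed
  then show ?thesis
    using d0 assms(2) unfolding d_def[symmetric]
    by (auto simp: admissible_direction_def tight_fractional_cycles_def)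
qed

lemma admissible_direction_exists:
  assumes y: "y \<in> polytope" and "\<not> half_integral E y"
  shows "\<exists>d e0. admissible_direction y d \<and> d e0 \<noteq> 0"
proof (cases "card (tight_fractional_vertices y) + card (tight_fractional_cycles y)
    < card (fractional_edges y)")
  case False
  have "finite (tight_fractional_cycles y)"
    using finite_cycles by (simp add: tight_fractional_cycles_def)
  moreover have "card (tight_fractional_cycles y) = 0" "(\<Sum>v\<in>V. excess y v) = 0"
    using False three_card_tight_fractional_cycles_le[OF y] sum_excess[OF y] by linarith+
  ultimately have "tight_fractional_cycles y = {}" "(\<Sum>v\<in>V. excess y v) = 0" by simp_all
  then have "admissible_direction y (\<lambda>e. if e \<in> fractional_edges y then y e - 1/2 else 0)"
    using admissible_direction_half_shift[OF y] finite_V by simp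
  moreover obtain e0 where "e0 \<in> E" "y e0 \<notin> {0, 1/2, 1}"
    using \<open>\<not> half_integral E y\<close> by (auto simp: half_integral_def)
  then have "e0 \<in> fractional_edges y \<and> y e0 - 1/2 \<noteq> 0"
    using polytopeD(2)[OF y \<open>e0 \<in> E\<close>] by (auto simp: fractional_edges_def less_le)
  ultimately show ?thesis by fastforce
qed (rule admissible_direction_if_few_tight)

section \<open>Extreme points and optimal solutions\<close>

lemma half_integral_if_extreme_point:
  assumes "extreme_point polytope x"
  shows "half_integral E x"
proof (rule ccontr)
  assume "\<not> half_integral E x"
  moreover have x: "x \<in> polytope" using assms by (simp add: extreme_point_def)
  ultimately obtain d e0 where d: "admissible_direction x d" "d e0 \<noteq> 0"
    using admissible_direction_exists by blast
  obtain l1 where "l1 > 0" "\<forall>t. 0 \<le> t \<and> t \<le> l1 \<longrightarrow> move x d t \<in> polytope"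
    using maximal_move[OF x d] by blast
  moreover obtain l2 where "l2 > 0" "\<forall>t. 0 \<le> t \<and> t \<le> l2 \<longrightarrow> move x (\<lambda>e. - d e) t \<in> polytope"
    using maximal_move[OF x admissible_direction_uminus[OF d(1)], of e0] d(2) by auto
  ultimately have a: "move x d (min l1 l2) \<in> polytope"
    and b: "move x (\<lambda>e. - d e) (min l1 l2) \<in> polytope" by simp_all
  have ne: "move x (\<lambda>e. - d e) (min l1 l2) \<noteq> move x d (min l1 l2)"
    using \<open>l1 > 0\<close> \<open>l2 > 0\<close> d(2) by (auto simp: move_def fun_eq_iff intro!: exI[of _ e0])
  have mid: "x = (\<lambda>e. (1 - 1/2) * move x (\<lambda>e. - d e) (min l1 l2) e + 1/2 * move x d (min l1 l2) e)"
    by (simp add: move_def algebra_simps)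
  have "\<forall>y\<in>polytope. \<forall>z\<in>polytope. \<forall>t::real. 0 < t \<and> t < 1 \<and> y \<noteq> z
      \<longrightarrow> x \<noteq> (\<lambda>e. (1 - t) * y e + t * z e)"
    using assms by (simp add: extreme_point_def)
  from this[rule_format, OF b a, of "1/2"] show False using ne mid by simp
qed

lemma half_integral_improvement:
  fixes w :: "'a set \<Rightarrow> real"
  assumes "y \<in> polytope"
  shows "\<exists>r\<in>polytope. half_integral E r \<and> (\<Sum>e\<in>E. w e * y e) \<le> (\<Sum>e\<in>E. w e * r e)"
  using assms
proof (induction "looseness y" arbitrary: y rule: less_induct)
  case less
  show ?case
  proof (cases "half_integral E y")
    case False
    then obtain d e0 where d: "admissible_direction y d" "d e0 \<noteq> 0"
      using admissible_direction_exists[OF less.prems] by blast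
    obtain d' where d': "admissible_direction y d'" "d' e0 \<noteq> 0" "(\<Sum>e\<in>E. w e * d' e) \<ge> 0"
    proof (cases "(\<Sum>e\<in>E. w e * d e) \<ge> 0")
      case True
      then show thesis using that d by blast
    next
      case False
      then show thesis using that[of "\<lambda>e. - d e"] admissible_direction_uminus[OF d(1)] d(2)
        by (simp add: sum_negf)
    qed
    obtain l where "l > 0" "move y d' l \<in> polytope" "looseness (move y d' l) < looseness y"
      using maximal_move[OF less.prems d'(1,2)] by auto
    then obtain r where r: "r \<in> polytope" "half_integral E r"
      "(\<Sum>e\<in>E. w e * move y d' l e) \<le> (\<Sum>e\<in>E. w e * r e)"
      using less.hyps by blast
    have "(\<Sum>e\<in>E. w e * move y d' l e) = (\<Sum>e\<in>E. w e * y e) + l * (\<Sum>e\<in>E. w e * d' e)"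
      by (simp add: move_def algebra_simps sum.distrib sum_distrib_left)
    moreover have "l * (\<Sum>e\<in>E. w e * d' e) \<ge> 0" using \<open>l > 0\<close> d'(3) by simp
    ultimately show ?thesis using r by (intro bexI[of _ r]) auto
  qed (use less.prems in blast)
qed

lemma half_integral_optimum:
  fixes w :: "'a set \<Rightarrow> real"
  shows "\<exists>x\<in>polytope. half_integral E x \<and> (\<forall>y\<in>polytope. (\<Sum>e\<in>E. w e * y e) \<le> (\<Sum>e\<in>E. w e * x e))"
proof -
  define H where "H = {r \<in> polytope. half_integral E r}"
  define obj where "obj r = (\<Sum>e\<in>E. w e * r e)" for r
  have "H \<subseteq> {f. \<forall>e. (e \<in> E \<longrightarrow> f e \<in> {0, 1/2, 1}) \<and> (e \<notin> E \<longrightarrow> f e = 0)}"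
    using polytopeD(1) by (auto simp: H_def half_integral_def)
  moreover have "finite {f. \<forall>e. (e \<in> E \<longrightarrow> f e \<in> {0, 1/2, 1::real}) \<and> (e \<notin> E \<longrightarrow> f e = 0)}"
    by (rule finite_set_of_finite_funs[OF finite_E]) simp
  ultimately have "finite H" by (rule finite_subset)
  moreover have "(\<lambda>e. 0) \<in> H"
    using cycle(2) by (force simp: H_def cycle_polytope_def half_integral_def)
  ultimately have "Max (obj ` H) \<in> obj ` H" by (intro Max_in) auto
  then obtain x where x: "x \<in> H" "obj x = Max (obj ` H)" by auto
  have "obj y \<le> obj x" if y: "y \<in> polytope" for y
  proof -
    obtain r where "r \<in> H" "obj y \<le> obj r"
      using half_integral_improvement[OF y, of w] by (auto simp: H_def obj_def)
    moreover from \<open>r \<in> H\<close> have "obj r \<le> Max (obj ` H)" using \<open>finite H\<close> by simp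
    ultimately show ?thesis using x by simp
  qed
  then show ?thesis using x by (auto simp: H_def obj_def)
qed

end

theorem mainTheorem3:
  fixes V :: "'a set" and E :: "'a set set" and \<C> :: "'a list set"
  assumes "graph V E"
    and "\<forall>C\<in>\<C>. is_odd_cycle V E C"
    and "\<forall>C\<in>\<C>. \<forall>D\<in>\<C>. C \<noteq> D \<longrightarrow> cycle_edges C \<inter> cycle_edges D = {}"
  shows "(\<forall>x. extreme_point (cycle_polytope V E \<C>) x \<longrightarrow> half_integral E x)
    \<and> (\<forall>w :: 'a set \<Rightarrow> real. \<exists>x\<in>cycle_polytope V E \<C>. half_integral E x \<and>
          (\<forall>y\<in>cycle_polytope V E \<C>. (\<Sum>e\<in>E. w e * y e) \<le> (\<Sum>e\<in>E. w e * x e)))"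
proof -
  interpret odd_cycle_packing V E \<C> using assms by unfold_locales
  show ?thesis using half_integral_if_extreme_point half_integral_optimum by blast
qed

end
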